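(* Fix $c\in\{0,1\}$. Consider the family of distributions on $(0,1)\cup\{c\}$ with densities, with respect to the measure $\lambda+\delta_c$ (where $\lambda$ is Lebesgue measure on $(0,1)$ and $\delta_c$ is the point mass at $c$), $$\mathrm{bi}_c(y;\alpha,\mu,\phi)=\begin{cases}\alpha, & y=c,\\ (1-\alpha)f(y;\mu,\phi), & y\in(0,1),\end{cases}$$ indexed by $(\alpha,\mu,\phi)\in(0,1)\times(0,1)\times(0,\infty)$, where $$f(y;\mu,\phi)=\frac{\Gamma(\phi)}{\Gamma(\mu\phi)\Gamma((1-\mu)\phi)}\,y^{\mu\phi-1}(1-y)^{(1-\mu)\phi-1},\quad y\in(0,1),$$ is the beta density with mean $\mu$ and precision $\phi$. (For $c=0$ this is the zero-inflated beta distribution $\mathrm{BEZI}(\alpha,\mu,\phi)$, and for $c=1$ the one-inflated beta distribution $\mathrm{BEOI}(\alpha,\mu,\phi)$.) Then this family (for either choice of $c$) is a three-parameter exponential family of full rank.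
   Context: A family of densities $\{p_\theta:\theta\in\Theta\}$ with respect to a measure $\nu$ on a space $\mathcal Y$ is called a $k$-parameter exponential family of full rank if there are a one-to-one map $\theta\mapsto\eta(\theta)\in\mathbb R^k$, a statistic $T=(t_1,\dots,t_k):\mathcal Y\to\mathbb R^k$, a real function $B^*$ and a positive function $h$ on $\mathcal Y$ such that $p_\theta(y)=\exp\{\eta(\theta)^\top T(y)-B^*(\eta(\theta))\}h(y)$ for all $y$ and $\theta$, where neither the components $t_1,\dots,t_k$ nor the components of $\eta$ satisfy a linear constraint, and the set $\{\eta(\theta):\theta\in\Theta\}$ contains a $k$-dimensional open rectangle. *)

theory Defs
  imports "HOL-Analysis.Analysis"
begin

definition beta_dens :: "real \<Rightarrow> real \<Rightarrow> real \<Rightarrow> real" where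
  "beta_dens mu phi y =
     Gamma phi / (Gamma (mu * phi) * Gamma ((1 - mu) * phi))
     * y powr (mu * phi - 1) * (1 - y) powr ((1 - mu) * phi - 1)"

definition bi_dens :: "real \<Rightarrow> real \<times> real \<times> real \<Rightarrow> real \<Rightarrow> real" where
  "bi_dens c \<theta> y = (case \<theta> of (alpha, mu, phi) \<Rightarrow>
     (if y = c then alpha else (1 - alpha) * beta_dens mu phi y))"

definition bi_params :: "(real \<times> real \<times> real) set" where
  "bi_params = {0<..<1} \<times> {0<..<1} \<times> {0<..}"

definition bi_space :: "real \<Rightarrow> real set" where
  "bi_space c = {0<..<1} \<union> {c}"

definition bi_measure :: "real \<Rightarrow> real measure" where
  "bi_measure c = measure_of UNIV (sets borel)
     (\<lambda>A. emeasure lborel (A \<inter> {0<..<1}) + indicator A c)"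

definition exp_family_full_rank_rep ::
  "('t \<Rightarrow> 'y \<Rightarrow> real) \<Rightarrow> 't set \<Rightarrow> 'y set \<Rightarrow> 'y measure \<Rightarrow>
   ('t \<Rightarrow> real ^ 'k::finite) \<Rightarrow> ('y \<Rightarrow> real ^ 'k) \<Rightarrow> (real ^ 'k \<Rightarrow> real) \<Rightarrow> ('y \<Rightarrow> real) \<Rightarrow> bool"
where
  "exp_family_full_rank_rep p \<Theta> Y \<nu> \<eta> T B h \<longleftrightarrow>
     inj_on \<eta> \<Theta> \<and>
     (\<forall>y\<in>Y. h y > 0) \<and>
     (\<forall>\<theta>\<in>\<Theta>. \<forall>y\<in>Y. p \<theta> y = exp (\<eta> \<theta> \<bullet> T y - B (\<eta> \<theta>)) * h y) \<and>
     \<not> (\<exists>a b. a \<noteq> 0 \<and> (AE y in \<nu>. a \<bullet> T y = b)) \<and>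
     \<not> (\<exists>a b. a \<noteq> 0 \<and> (\<forall>\<theta>\<in>\<Theta>. a \<bullet> \<eta> \<theta> = b)) \<and>
     (\<exists>l u. (\<forall>i. l $ i < u $ i) \<and> box l u \<subseteq> \<eta> ` \<Theta>)"

end

theory Submission
  imports Defs
begin

text \<open>
  With \<open>p = \<mu>\<phi>\<close> and \<open>q = (1 - \<mu>)\<phi>\<close> the density is \<open>exp (\<eta> \<bullet> T y - B \<eta>) h y\<close> for
  \<open>\<eta> = (ln (\<alpha> Beta(p,q) / (1 - \<alpha>)), p, q)\<close>, \<open>T y = (1, 0, 0)\<close> at \<open>y = c\<close> and
  \<open>T y = (0, ln y, ln (1 - y))\<close> on \<open>(0,1)\<close>. The map \<open>\<theta> \<mapsto> \<eta>\<close> is a bijection onto the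
  open set \<open>{\<eta>. \<eta>\<^sub>2 > 0, \<eta>\<^sub>3 > 0}\<close>, so the natural parameters satisfy no affine constraint.
  For the statistic, the atom at \<open>c\<close> pins down the first coordinate of a constraint, and on
  \<open>(0,1)\<close> a Lebesgue-a.e. affine relation between the continuous functions \<open>ln y\<close> and
  \<open>ln (1 - y)\<close> would hold everywhere, which it does not. Here \<open>c \<in> {0,1}\<close> matters: it keeps
  the atom outside \<open>(0,1)\<close>.
\<close>

lemma inner_vec3: "x \<bullet> y = x $ 1 * y $ 1 + x $ 2 * y $ 2 + x $ 3 * y $ 3" for x y :: "real ^ 3"
  by (simp add: inner_vec_def sum_3)

lemma inner_const_on_open_imp_zero:
  fixes a :: "'a::real_inner"
  assumes "open S" "x \<in> S" "\<forall>v\<in>S. a \<bullet> v = b"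
  shows "a = 0"
proof -
  obtain e where e: "e > 0" "ball x e \<subseteq> S"
    using assms(1,2) openE by blast
  define t where "t = e / (2 * (norm a + 1))"
  have "0 < norm a + 1"
    by (simp add: add_nonneg_pos)
  then have t: "t > 0" "t * (norm a + 1) = e / 2"
    using e(1) by (simp_all add: t_def field_simps)
  then have "norm (t *\<^sub>R a) < e"
    using e(1) by (simp add: distrib_left)
  then have "x + t *\<^sub>R a \<in> S"
    using e(2) by (auto simp: dist_norm)
  then have "a \<bullet> (x + t *\<^sub>R a) = a \<bullet> x"
    using assms(2,3) by simp
  then have "t * (a \<bullet> a) = 0"
    by (simp add: inner_add_right)
  then show "a = 0"
    using t(1) by simp
qed

lemma continuous_on_AE_lborel_eq_const:
  fixes g :: "'a::euclidean_space \<Rightarrow> 'b::t2_space"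
  assumes "open S" "continuous_on S g" "AE x in lborel. x \<in> S \<longrightarrow> g x = b"
  shows "\<forall>x\<in>S. g x = b"
proof -
  obtain N where N: "\<And>x. x \<in> space lborel - N \<Longrightarrow> x \<in> S \<longrightarrow> g x = b" "N \<in> null_sets lborel"
    using AE_E3[OF assms(3)] by metis
  have "negligible N"
    using N(2) by (simp add: negligible_iff_null_sets null_sets_completionI)
  moreover have "S \<inter> g -` (- {b}) \<subseteq> N"
    using N(1) by auto
  ultimately have "negligible (S \<inter> g -` (- {b}))"
    by (rule negligible_subset)
  moreover have "open (S \<inter> g -` (- {b}))"
    using assms(1,2) by (intro continuous_open_preimage) auto
  ultimately show ?thesis
    using open_not_negligible by blast
qed

lemma ln_ln_one_minus_independent:
  assumes "\<forall>y\<in>{0<..<1::real}. p * ln y + q * ln (1 - y) = b"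
  shows "p = 0" "q = 0" "b = 0"
proof -
  have ln4: "ln (4::real) = 2 * ln 2"
    using ln_realpow[of 2 2] by simp
  have half: "- (p + q) * ln 2 = b"
    using assms[rule_format, of "1/2"] by (simp add: ln_div algebra_simps)
  have quarter: "- 2 * ln 2 * p + (ln 3 - 2 * ln 2) * q = b"
    using assms[rule_format, of "1/4"] ln4 by (simp add: ln_div algebra_simps)
  have three_quarters: "(ln 3 - 2 * ln 2) * p - 2 * ln 2 * q = b"
    using assms[rule_format, of "3/4"] ln4 by (simp add: ln_div algebra_simps)
  have "ln 3 * (q - p) = 0"
    using quarter three_quarters by (simp add: algebra_simps)
  then have "q = p"
    by simp
  moreover have "ln (3::real) < 2 * ln 2"
    using ln_less_cancel_iff[of 3 4] ln4 by simp
  ultimately show "p = 0" "q = 0" "b = 0"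
    using half quarter by (simp_all add: algebra_simps)
qed

lemma Beta_real_pos: "0 < x \<Longrightarrow> 0 < y \<Longrightarrow> 0 < Beta x y" for x y :: real
  by (simp add: Beta_def)

lemma beta_dens_eq_Beta:
  "beta_dens \<mu> \<phi> y
     = y powr (\<mu> * \<phi> - 1) * (1 - y) powr ((1 - \<mu>) * \<phi> - 1) / Beta (\<mu> * \<phi>) ((1 - \<mu>) * \<phi>)"
proof -
  have "\<mu> * \<phi> + (1 - \<mu>) * \<phi> = \<phi>"
    by (simp add: algebra_simps)
  then show ?thesis
    by (simp add: beta_dens_def Beta_def)
qed

lemma emeasure_bi_measure:
  assumes "A \<in> sets borel"
  shows "emeasure (bi_measure c) A = emeasure lborel (A \<inter> {0<..<1}) + indicator A c"
  unfolding bi_measure_def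
proof (rule emeasure_measure_of_sigma)
  show "sigma_algebra UNIV (sets borel)"
    using sets.sigma_algebra_axioms[of borel] by simp
  show "positive (sets borel) (\<lambda>A. emeasure lborel (A \<inter> {0<..<1}) + indicator A c)"
    by (simp add: positive_def)
  show "countably_additive (sets borel) (\<lambda>A. emeasure lborel (A \<inter> {0<..<1}) + indicator A c)"
    unfolding countably_additive_def
  proof (intro allI impI)
    fix F :: "nat \<Rightarrow> real set"
    assume F: "range F \<subseteq> sets borel" "disjoint_family F"
    have lebesgue_part:
      "(\<Sum>i. emeasure lborel (F i \<inter> {0<..<1})) = emeasure lborel (\<Union>i. F i \<inter> {0<..<1})"
      using F by (intro suminf_emeasure) (auto simp: disjoint_family_on_def)
    have atom_part: "(\<Sum>i. (indicator (F i) c :: ennreal)) = indicator (\<Union>i. F i) c"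
    proof (cases "\<exists>j. c \<in> F j")
      case True
      then obtain j where j: "c \<in> F j" by blast
      have "\<And>i. (indicator (F i) c :: ennreal) = (if i = j then 1 else 0)"
        using F(2) j by (auto simp: disjoint_family_on_def indicator_def)
      moreover have "(\<lambda>i. if i = j then (1::ennreal) else 0) sums 1"
        using sums_single[of j "\<lambda>_. (1::ennreal)"] by simp
      ultimately show ?thesis using j by (simp add: sums_iff indicator_def) blast
    next
      case False
      then show ?thesis by (simp add: indicator_def)
    qed
    show "(\<Sum>i. emeasure lborel (F i \<inter> {0<..<1}) + indicator (F i) c) =
          emeasure lborel (\<Union> (range F) \<inter> {0<..<1}) + indicator (\<Union> (range F)) c"
      using lebesgue_part atom_part by (simp add: suminf_add[symmetric])
  qed
qed fact

lemma AE_bi_measureD: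
  assumes "AE y in bi_measure c. P y"
  shows "P c" and "AE y in lborel. y \<in> {0<..<1} \<longrightarrow> P y"
proof -
  have space: "space (bi_measure c) = UNIV" and sets: "sets (bi_measure c) = sets borel"
    using sets.sigma_sets_eq[of borel] by (simp_all add: bi_measure_def)
  from assms obtain N where N: "{y \<in> space (bi_measure c). \<not> P y} \<subseteq> N"
    "emeasure (bi_measure c) N = 0" "N \<in> sets (bi_measure c)"
    by (rule AE_E)
  then have "N \<in> sets borel"
    by (simp add: sets)
  with N(2) have "emeasure lborel (N \<inter> {0<..<1}) + indicator N c = 0"
    by (simp add: emeasure_bi_measure)
  then have null: "emeasure lborel (N \<inter> {0<..<1}) = 0" and "c \<notin> N"
    by (auto simp: indicator_def split: if_splits)
  show "P c"
    using \<open>c \<notin> N\<close> N(1) space by auto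
  show "AE y in lborel. y \<in> {0<..<1} \<longrightarrow> P y"
    by (rule AE_I[where N = "N \<inter> {0<..<1}"]) (use N(1) space null \<open>N \<in> sets borel\<close> in auto)
qed

definition bi_natural_param :: "real \<times> real \<times> real \<Rightarrow> real ^ 3" where
  "bi_natural_param \<theta> = (case \<theta> of (\<alpha>, \<mu>, \<phi>) \<Rightarrow>
     vector [ln (\<alpha> / (1 - \<alpha>) * Beta (\<mu> * \<phi>) ((1 - \<mu>) * \<phi>)), \<mu> * \<phi>, (1 - \<mu>) * \<phi>])"

definition bi_statistic :: "real \<Rightarrow> real \<Rightarrow> real ^ 3" where
  "bi_statistic c y = (if y = c then vector [1, 0, 0] else vector [0, ln y, ln (1 - y)])"

definition bi_base :: "real \<Rightarrow> real \<Rightarrow> real" where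
  "bi_base c y = (if y = c then 1 else 1 / (y * (1 - y)))"

text \<open>\<open>exp (bi_log_normalizer \<eta>)\<close> is the integral of \<open>exp (\<eta> \<bullet> T) h\<close>: the atom
  contributes \<open>exp \<eta>\<^sub>1\<close> and the Lebesgue part the beta integral \<open>Beta \<eta>\<^sub>2 \<eta>\<^sub>3\<close>.\<close>
definition bi_log_normalizer :: "real ^ 3 \<Rightarrow> real" where
  "bi_log_normalizer v = ln (exp (v $ 1) + Beta (v $ 2) (v $ 3))"

lemma image_bi_natural_param: "bi_natural_param ` bi_params = {v. 0 < v $ 2 \<and> 0 < v $ 3}"
proof (intro equalityI subsetI)
  fix v assume "v \<in> bi_natural_param ` bi_params"
  then show "v \<in> {v. 0 < v $ 2 \<and> 0 < v $ 3}"
    by (auto simp: bi_params_def bi_natural_param_def)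
next
  fix v :: "real ^ 3"
  assume "v \<in> {v. 0 < v $ 2 \<and> 0 < v $ 3}"
  then have v: "0 < v $ 2" "0 < v $ 3" by auto
  define \<phi> where "\<phi> = v $ 2 + v $ 3"
  define \<mu> where "\<mu> = v $ 2 / \<phi>"
  define r where "r = exp (v $ 1) / Beta (v $ 2) (v $ 3)"
  define \<alpha> where "\<alpha> = r / (1 + r)"
  have "0 < \<phi>" "0 < r" "0 < Beta (v $ 2) (v $ 3)"
    using v by (simp_all add: \<phi>_def r_def Beta_real_pos)
  then have in_params: "(\<alpha>, \<mu>, \<phi>) \<in> bi_params"
    using v by (simp add: bi_params_def \<alpha>_def \<mu>_def \<phi>_def field_simps)
  have "\<mu> * \<phi> = v $ 2" "(1 - \<mu>) * \<phi> = v $ 3" "\<alpha> / (1 - \<alpha>) = r"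
    using \<open>0 < \<phi>\<close> \<open>0 < r\<close> by (simp_all add: \<mu>_def \<phi>_def \<alpha>_def field_simps)
  moreover have "r * Beta (v $ 2) (v $ 3) = exp (v $ 1)"
    using \<open>0 < Beta (v $ 2) (v $ 3)\<close> by (simp add: r_def)
  ultimately have "bi_natural_param (\<alpha>, \<mu>, \<phi>) = v"
    by (simp only: bi_natural_param_def prod.case ln_exp) (simp add: vec_eq_iff forall_3)
  then show "v \<in> bi_natural_param ` bi_params"
    using in_params by (metis image_eqI)
qed

lemma inj_on_bi_natural_param: "inj_on bi_natural_param bi_params"
proof (rule inj_onI)
  fix \<theta> \<theta>'
  assume "\<theta> \<in> bi_params" "\<theta>' \<in> bi_params" and eq: "bi_natural_param \<theta> = bi_natural_param \<theta>'"
  then obtain \<alpha> \<mu> \<phi> \<alpha>' \<mu>' \<phi>' where \<theta>: "\<theta> = (\<alpha>, \<mu>, \<phi>)" "\<theta>' = (\<alpha>', \<mu>', \<phi>')"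
    and ranges: "0 < \<alpha>" "\<alpha> < 1" "0 < \<mu>" "\<mu> < 1" "0 < \<phi>" "0 < \<alpha>'" "\<alpha>' < 1"
    by (auto simp: bi_params_def)
  have shape: "\<mu> * \<phi> = \<mu>' * \<phi>'" "(1 - \<mu>) * \<phi> = (1 - \<mu>') * \<phi>'"
    using eq by (simp_all add: \<theta> bi_natural_param_def vec_eq_iff forall_3)
  then have "\<phi> = \<phi>'" "\<mu> = \<mu>'"
    using ranges by (simp_all add: algebra_simps)
  define Be where "Be = Beta (\<mu> * \<phi>) ((1 - \<mu>) * \<phi>)"
  have "0 < Be"
    using ranges by (simp add: Be_def Beta_real_pos)
  have "bi_natural_param \<theta> $ 1 = bi_natural_param \<theta>' $ 1"
    using eq by simp
  then have "ln (\<alpha> / (1 - \<alpha>) * Be) = ln (\<alpha>' / (1 - \<alpha>') * Be)"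
    by (simp only: \<theta> bi_natural_param_def prod.case Be_def \<open>\<phi> = \<phi>'\<close> \<open>\<mu> = \<mu>'\<close>) simp
  then have "\<alpha> / (1 - \<alpha>) * Be = \<alpha>' / (1 - \<alpha>') * Be"
    using ranges \<open>0 < Be\<close> by (subst (asm) ln_inj_iff) auto
  then have "\<alpha> / (1 - \<alpha>) = \<alpha>' / (1 - \<alpha>')"
    using \<open>0 < Be\<close> by (simp only: mult_cancel_right) simp
  then have "\<alpha> = \<alpha>'"
    using ranges by (simp add: field_simps)
  then show "\<theta> = \<theta>'"
    using \<theta> \<open>\<phi> = \<phi>'\<close> \<open>\<mu> = \<mu>'\<close> by simp
qed

lemma bi_dens_exponential_form:
  assumes "\<theta> \<in> bi_params" "y \<in> bi_space c"
  shows "bi_dens c \<theta> y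
    = exp (bi_natural_param \<theta> \<bullet> bi_statistic c y - bi_log_normalizer (bi_natural_param \<theta>))
      * bi_base c y"
proof -
  obtain \<alpha> \<mu> \<phi> where \<theta>: "\<theta> = (\<alpha>, \<mu>, \<phi>)" and ranges: "0 < \<alpha>" "\<alpha> < 1" "0 < \<mu>" "\<mu> < 1" "0 < \<phi>"
    using assms(1) by (auto simp: bi_params_def)
  define p where "p = \<mu> * \<phi>"
  define q where "q = (1 - \<mu>) * \<phi>"
  define Be where "Be = Beta p q"
  define E where "E = \<alpha> / (1 - \<alpha>) * Be"
  have "0 < Be"
    using ranges by (simp add: Be_def p_def q_def Beta_real_pos)
  then have "0 < E"
    using ranges by (simp add: E_def)
  have \<eta>: "bi_natural_param \<theta> = vector [ln E, p, q]"
    by (simp add: \<theta> bi_natural_param_def E_def Be_def p_def q_def)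
  have normalizer: "bi_log_normalizer (bi_natural_param \<theta>) = ln (Be / (1 - \<alpha>))"
  proof -
    have "E + Be = Be / (1 - \<alpha>)"
      using ranges by (simp add: E_def field_simps)
    then show ?thesis
      using \<open>0 < E\<close> by (simp add: \<eta> bi_log_normalizer_def Be_def)
  qed
  show ?thesis
  proof (cases "y = c")
    case True
    have "bi_natural_param \<theta> \<bullet> bi_statistic c y = ln E" "bi_base c y = 1"
      using True by (simp_all add: \<eta> bi_statistic_def inner_vec3 bi_base_def)
    then have "exp (bi_natural_param \<theta> \<bullet> bi_statistic c y - bi_log_normalizer (bi_natural_param \<theta>))
        * bi_base c y = exp (ln E - ln (Be / (1 - \<alpha>)))"
      by (simp only: normalizer mult_1_right)
    also have "\<dots> = \<alpha>"
      using \<open>0 < E\<close> \<open>0 < Be\<close> ranges by (simp add: exp_diff E_def)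
    also have "\<dots> = bi_dens c \<theta> y"
      using True by (simp add: bi_dens_def \<theta>)
    finally show ?thesis ..
  next
    case False
    then have y: "0 < y" "y < 1"
      using assms(2) by (auto simp: bi_space_def)
    have "bi_natural_param \<theta> \<bullet> bi_statistic c y = p * ln y + q * ln (1 - y)"
      "bi_base c y = 1 / (y * (1 - y))"
      using False by (simp_all add: \<eta> bi_statistic_def inner_vec3 bi_base_def)
    then have "exp (bi_natural_param \<theta> \<bullet> bi_statistic c y - bi_log_normalizer (bi_natural_param \<theta>))
        * bi_base c y = exp (p * ln y + q * ln (1 - y) - ln (Be / (1 - \<alpha>))) * (1 / (y * (1 - y)))"
      by (simp only: normalizer)
    also have "\<dots> = y powr p * (1 - y) powr q * ((1 - \<alpha>) / Be) * (1 / (y * (1 - y)))"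
      using y ranges \<open>0 < Be\<close> by (simp add: exp_add exp_diff powr_def)
    also have "\<dots> = (1 - \<alpha>) * (y powr (p - 1) * (1 - y) powr (q - 1) / Be)"
      using y by (simp add: powr_diff mult_ac)
    also have "\<dots> = bi_dens c \<theta> y"
      using False by (simp add: bi_dens_def \<theta> beta_dens_eq_Beta p_def q_def Be_def)
    finally show ?thesis ..
  qed
qed

lemma box_subset_image_bi_natural_param:
  "box (vector [0, 1, 1]) (vector [1, 2, 2]) \<subseteq> bi_natural_param ` bi_params"
  unfolding image_bi_natural_param
proof
  fix v :: "real ^ 3"
  assume "v \<in> box (vector [0, 1, 1]) (vector [1, 2, 2])"
  then have "1 < v $ 2" "1 < v $ 3"
    unfolding mem_box_cart by (metis vector_3(2), metis vector_3(3))
  then show "v \<in> {v. 0 < v $ 2 \<and> 0 < v $ 3}"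
    by simp
qed

lemma bi_natural_param_no_linear_constraint:
  assumes "\<forall>\<theta>\<in>bi_params. a \<bullet> bi_natural_param \<theta> = b"
  shows "a = 0"
proof (rule inner_const_on_open_imp_zero)
  show "open {v :: real ^ 3. 0 < v $ 2 \<and> 0 < v $ 3}"
    by (intro open_Collect_conj open_Collect_less continuous_intros)
  show "vector [0, 1, 1] \<in> {v :: real ^ 3. 0 < v $ 2 \<and> 0 < v $ 3}"
    by simp
  show "\<forall>v\<in>{v. 0 < v $ 2 \<and> 0 < v $ 3}. a \<bullet> v = b"
    using assms by (simp flip: image_bi_natural_param)
qed

lemma bi_statistic_no_linear_constraint:
  assumes "c = 0 \<or> c = 1" and "AE y in bi_measure c. a \<bullet> bi_statistic c y = b"
  shows "a = 0"
proof -
  define g where "g y = a $ 2 * ln y + a $ 3 * ln (1 - y)" for y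
  have statistic_off_c: "a \<bullet> bi_statistic c y = g y" if "y \<in> {0<..<1}" for y
    using that assms(1) by (auto simp: bi_statistic_def inner_vec3 g_def)
  have "a $ 1 = b"
    using AE_bi_measureD(1)[OF assms(2)] by (simp add: bi_statistic_def inner_vec3)
  have "AE y in lborel. y \<in> {0<..<1} \<longrightarrow> g y = b"
    using AE_bi_measureD(2)[OF assms(2)] by eventually_elim (simp add: statistic_off_c)
  moreover have "continuous_on {0<..<1} g"
    unfolding g_def by (intro continuous_intros) auto
  ultimately have "\<forall>y\<in>{0<..<1}. g y = b"
    by (intro continuous_on_AE_lborel_eq_const) simp_all
  then have "a $ 2 = 0" "a $ 3 = 0" "b = 0"
    unfolding g_def by (rule ln_ln_one_minus_independent)+
  with \<open>a $ 1 = b\<close> show "a = 0"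
    by (simp add: vec_eq_iff forall_3)
qed

theorem proposition1:
  fixes c :: real
  assumes "c = 0 \<or> c = 1"
  shows "\<exists>(\<eta> :: real \<times> real \<times> real \<Rightarrow> real ^ 3) T B h.
           exp_family_full_rank_rep (bi_dens c) bi_params (bi_space c) (bi_measure c) \<eta> T B h"
proof -
  have "exp_family_full_rank_rep (bi_dens c) bi_params (bi_space c) (bi_measure c)
      bi_natural_param (bi_statistic c) bi_log_normalizer (bi_base c)"
    unfolding exp_family_full_rank_rep_def
  proof (intro conjI)
    show "inj_on bi_natural_param bi_params"
      by (rule inj_on_bi_natural_param)
    show "\<forall>y\<in>bi_space c. 0 < bi_base c y"
      by (auto simp: bi_space_def bi_base_def)
    show "\<forall>\<theta>\<in>bi_params. \<forall>y\<in>bi_space c. bi_dens c \<theta> y = exp (bi_natural_param \<theta> \<bullet> bi_statistic c y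
        - bi_log_normalizer (bi_natural_param \<theta>)) * bi_base c y"
      using bi_dens_exponential_form by blast
    show "\<nexists>a b. a \<noteq> 0 \<and> (AE y in bi_measure c. a \<bullet> bi_statistic c y = b)"
      using bi_statistic_no_linear_constraint[OF assms] by blast
    show "\<nexists>a b. a \<noteq> 0 \<and> (\<forall>\<theta>\<in>bi_params. a \<bullet> bi_natural_param \<theta> = b)"
      using bi_natural_param_no_linear_constraint by blast
    show "\<exists>l u. (\<forall>i. l $ i < u $ i) \<and> box l u \<subseteq> bi_natural_param ` bi_params"
      using box_subset_image_bi_natural_param by (intro exI[of _ "vector [0, 1, 1]"] exI[of _ "vector [1, 2, 2]"]) (simp add: forall_3)
  qed
  then show ?thesis
    by blast
qed

end
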